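(* Let $G$ be a graph, let $R\subseteq V(G)$ be the vertex set of an induced copy of $P_3$ in $G$, and let $C\subseteq V(G)\setminus R$ be a clique in $G$ with at most two vertices, each of odd degree in $G$. Assume every vertex of $R$ is adjacent to every vertex of $C$. Then one can admissibly remove from $G$ a subset of $C\cup R$ containing all of $C$, such that the remaining vertices of $R$ form a clique with at most two vertices, each of odd degree in the remaining graph.
   Context: $P_3$ denotes the path with three edges (four vertices). Removing a set $T$ of vertices from a graph $G$ is a simple admissible removal if $T$ is an independent set in $G$ and the number of edges between $T$ and $V(G)\setminus T$ is even. Removing a set of vertices is admissible if it can be realised by a sequence of simple admissible removals, each performed in the graph remaining after the previous ones. Degrees are always taken in the current remaining graph. *)

theory Defs
  imports Main
begin

text \<open>Removing vertices only shrinks the vertex set; the remaining graph is the induced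
subgraph on the remaining vertices.\<close>

definition simple_graph :: "'a set \<Rightarrow> ('a \<Rightarrow> 'a \<Rightarrow> bool) \<Rightarrow> bool" where
  "simple_graph V E \<longleftrightarrow> finite V \<and> (\<forall>x y. E x y \<longrightarrow> E y x) \<and> (\<forall>x. \<not> E x x)"

definition deg :: "'a set \<Rightarrow> ('a \<Rightarrow> 'a \<Rightarrow> bool) \<Rightarrow> 'a \<Rightarrow> nat" where
  "deg V E x = card {y \<in> V. E x y}"

definition clique :: "('a \<Rightarrow> 'a \<Rightarrow> bool) \<Rightarrow> 'a set \<Rightarrow> bool" where
  "clique E C \<longleftrightarrow> (\<forall>x\<in>C. \<forall>y\<in>C. x \<noteq> y \<longrightarrow> E x y)"

definition independent :: "('a \<Rightarrow> 'a \<Rightarrow> bool) \<Rightarrow> 'a set \<Rightarrow> bool" where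
  "independent E T \<longleftrightarrow> (\<forall>x\<in>T. \<forall>y\<in>T. \<not> E x y)"

text \<open>R is the vertex set of an induced path with three edges a-b-c-d.\<close>
definition induced_P3 :: "'a set \<Rightarrow> ('a \<Rightarrow> 'a \<Rightarrow> bool) \<Rightarrow> 'a set \<Rightarrow> bool" where
  "induced_P3 V E R \<longleftrightarrow> R \<subseteq> V \<and> (\<exists>a b c d. R = {a, b, c, d} \<and> distinct [a, b, c, d]
      \<and> E a b \<and> E b c \<and> E c d \<and> \<not> E a c \<and> \<not> E a d \<and> \<not> E b d)"

definition simple_admissible :: "'a set \<Rightarrow> ('a \<Rightarrow> 'a \<Rightarrow> bool) \<Rightarrow> 'a set \<Rightarrow> bool" where
  "simple_admissible V E T \<longleftrightarrow> T \<subseteq> V \<and> independent E T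
      \<and> even (card {(t, v). t \<in> T \<and> v \<in> V - T \<and> E t v})"

inductive admissible :: "'a set \<Rightarrow> ('a \<Rightarrow> 'a \<Rightarrow> bool) \<Rightarrow> 'a set \<Rightarrow> bool" where
  adm_empty: "admissible V E {}"
| adm_step: "simple_admissible V E T1 \<Longrightarrow> admissible (V - T1) E T2
      \<Longrightarrow> admissible V E (T1 \<union> T2)"

end

theory Submission
  imports Defs
begin

text \<open>Removing a single even vertex, or two non-adjacent vertices of even degree sum, is a
simple admissible removal.  A triangle-free set R can therefore always be reduced to a clique
of at most two odd vertices: delete an even vertex if there is one, otherwise two
non-adjacent (odd) vertices; when neither exists, R is a triangle-free clique of odd vertices.
A clique C of odd vertices complete to R is absorbed by alternately deleting a currently
even vertex of R, which makes all remaining vertices of C even, and a vertex of C.  For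
|C| = 2 this needs an even r and a second vertex s of R that is odd once r is deleted; an
induced P3 provides such a pair as soon as one of its vertices is even.  If all four
vertices of the P3 a-b-c-d are odd, deleting the two ends a and d first makes b and c even
and keeps C odd.\<close>

definition triangle_free :: "('a \<Rightarrow> 'a \<Rightarrow> bool) \<Rightarrow> 'a set \<Rightarrow> bool" where
  "triangle_free E R \<longleftrightarrow> \<not> (\<exists>u\<in>R. \<exists>v\<in>R. \<exists>w\<in>R. E u v \<and> E v w \<and> E u w)"

definition odd_small_clique :: "'a set \<Rightarrow> ('a \<Rightarrow> 'a \<Rightarrow> bool) \<Rightarrow> 'a set \<Rightarrow> bool" where
  "odd_small_clique V E K \<longleftrightarrow> clique E K \<and> card K \<le> 2 \<and> (\<forall>z\<in>K. odd (deg V E z))"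

definition admissible_reduction :: "'a set \<Rightarrow> ('a \<Rightarrow> 'a \<Rightarrow> bool) \<Rightarrow> 'a set \<Rightarrow> 'a set \<Rightarrow> bool" where
  "admissible_reduction V E R S \<longleftrightarrow> admissible V E S \<and> odd_small_clique (V - S) E (R - S)"

lemma simple_graph_Diff: "simple_graph V E \<Longrightarrow> simple_graph (V - T) E"
  by (simp add: simple_graph_def)

lemma deg_Diff_singleton:
  assumes "finite V"
  shows "deg V E z = deg (V - {v}) E z + (if v \<in> V \<and> E z v then 1 else 0)"
proof -
  have eq: "{y \<in> V - {v}. E z y} = {y \<in> V. E z y} - {v}" by auto
  have fin: "finite {y \<in> V. E z y}" using assms by simp
  show ?thesis
  proof (cases "v \<in> V \<and> E z v")
    case True
    then have "v \<in> {y \<in> V. E z y}" by simp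
    with fin have "card {y \<in> V. E z y} > 0" using card_gt_0_iff by blast
    with fin \<open>v \<in> {y \<in> V. E z y}\<close> show ?thesis
      unfolding deg_def eq using True by (simp add: card_Diff_singleton)
  next
    case False
    then have "{y \<in> V. E z y} - {v} = {y \<in> V. E z y}" by auto
    with False show ?thesis unfolding deg_def eq by simp
  qed
qed

lemma deg_Diff_pair:
  assumes "finite V" "u \<noteq> w"
  shows "deg V E z = deg (V - {u, w}) E z + (if u \<in> V \<and> E z u then 1 else 0)
           + (if w \<in> V \<and> E z w then 1 else 0)"
proof -
  have "deg (V - {u}) E z = deg (V - {u} - {w}) E z + (if w \<in> V - {u} \<and> E z w then 1 else 0)"
    using assms(1) by (intro deg_Diff_singleton) simp
  moreover have "V - {u} - {w} = V - {u, w}" by auto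
  ultimately show ?thesis using deg_Diff_singleton[OF assms(1), of E z u] assms(2) by simp
qed

lemma card_boundary_edges_independent:
  assumes "finite V" "T \<subseteq> V" "independent E T"
  shows "card {(t, v). t \<in> T \<and> v \<in> V - T \<and> E t v} = (\<Sum>t\<in>T. deg V E t)"
proof -
  have "{(t, v). t \<in> T \<and> v \<in> V - T \<and> E t v} = Sigma T (\<lambda>t. {v \<in> V. E t v})"
    using assms(3) unfolding independent_def by auto
  moreover have "finite T" using assms(1,2) finite_subset by auto
  ultimately show ?thesis using assms(1) by (simp add: card_SigmaI deg_def)
qed

lemma admissible_insert_even:
  assumes "simple_graph V E" "v \<in> V" "even (deg V E v)" "admissible (V - {v}) E S"
  shows "admissible V E ({v} \<union> S)"
proof (rule adm_step[OF _ assms(4)])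
  have "independent E {v}" using assms(1) by (simp add: independent_def simple_graph_def)
  moreover have "finite V" using assms(1) by (simp add: simple_graph_def)
  ultimately show "simple_admissible V E {v}"
    using assms card_boundary_edges_independent[of V "{v}" E] by (simp add: simple_admissible_def)
qed

lemma admissible_insert_pair:
  assumes "simple_graph V E" "u \<in> V" "w \<in> V" "u \<noteq> w" "\<not> E u w"
    and "even (deg V E u + deg V E w)" "admissible (V - {u, w}) E S"
  shows "admissible V E ({u, w} \<union> S)"
proof (rule adm_step[OF _ assms(7)])
  have "independent E {u, w}"
    using assms(1,5) by (auto simp add: independent_def simple_graph_def)
  moreover have "finite V" using assms(1) by (simp add: simple_graph_def)
  ultimately show "simple_admissible V E {u, w}"
    using assms card_boundary_edges_independent[of V "{u, w}" E]
    by (simp add: simple_admissible_def)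
qed

lemma admissible_reduction_insert_even:
  assumes "simple_graph V E" "v \<in> V" "even (deg V E v)"
    and "admissible_reduction (V - {v}) E (R - {v}) S"
  shows "admissible_reduction V E R ({v} \<union> S)"
proof -
  have "R - ({v} \<union> S) = R - {v} - S" "V - ({v} \<union> S) = V - {v} - S" by auto
  then show ?thesis
    using assms admissible_insert_even[OF assms(1-3)] unfolding admissible_reduction_def by simp
qed

lemma admissible_reduction_insert_pair:
  assumes "simple_graph V E" "u \<in> V" "w \<in> V" "u \<noteq> w" "\<not> E u w"
    and "even (deg V E u + deg V E w)" "admissible_reduction (V - {u, w}) E (R - {u, w}) S"
  shows "admissible_reduction V E R ({u, w} \<union> S)"
proof -
  have "R - ({u, w} \<union> S) = R - {u, w} - S" "V - ({u, w} \<union> S) = V - {u, w} - S" by auto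
  then show ?thesis
    using assms admissible_insert_pair[OF assms(1-6)] unfolding admissible_reduction_def by simp
qed

lemma triangle_free_subset: "triangle_free E R \<Longrightarrow> R' \<subseteq> R \<Longrightarrow> triangle_free E R'"
  unfolding triangle_free_def by blast

lemma card_le_2_if_clique_triangle_free:
  assumes "clique E R" "triangle_free E R"
  shows "card R \<le> 2"
proof (rule ccontr)
  assume "\<not> card R \<le> 2"
  then obtain K where "K \<subseteq> R" "card K = 3"
    by (metis not_le_imp_less Suc_leI numeral_2_eq_2 numeral_3_eq_3 obtain_subset_with_card_n)
  then obtain u v w where "u \<in> R" "v \<in> R" "w \<in> R" "u \<noteq> v" "v \<noteq> w" "u \<noteq> w"
    by (auto simp: card_3_iff)
  with assms show False unfolding clique_def triangle_free_def by metis
qed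

lemma admissible_reduction_triangle_free:
  assumes "simple_graph V E" "R \<subseteq> V" "triangle_free E R"
  shows "\<exists>S\<subseteq>R. admissible_reduction V E R S"
  using assms
proof (induction "card R" arbitrary: V R rule: less_induct)
  case less
  have fin: "finite R" using less.prems(1,2) finite_subset by (auto simp: simple_graph_def)
  have IH: "\<exists>S\<subseteq>R - T. admissible_reduction (V - T) E (R - T) S" if "T \<subseteq> R" "T \<noteq> {}" for T
  proof (rule less.hyps)
    have "R - T \<subset> R" using that by blast
    then show "card (R - T) < card R" by (rule psubset_card_mono[OF fin])
  qed (use less.prems triangle_free_subset[of E R "R - T"] in \<open>auto intro: simple_graph_Diff\<close>)
  consider (reduced) "odd_small_clique V E R"
    | (even) v where "v \<in> R" "even (deg V E v)"
    | (pair) u w where "u \<in> R" "w \<in> R" "u \<noteq> w" "\<not> E u w" "odd (deg V E u)" "odd (deg V E w)"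
    using card_le_2_if_clique_triangle_free[OF _ less.prems(3)]
    unfolding odd_small_clique_def clique_def by blast
  then show ?case
  proof cases
    case reduced
    then show ?thesis by (intro exI[of _ "{}"]) (simp add: admissible_reduction_def adm_empty)
  next
    case even
    with IH[of "{v}"] obtain S where S: "S \<subseteq> R - {v}"
      "admissible_reduction (V - {v}) E (R - {v}) S" by auto
    have "v \<in> V" using even less.prems(2) by blast
    from admissible_reduction_insert_even[OF less.prems(1) this even(2) S(2)]
    show ?thesis using S(1) even(1) by (intro exI[of _ "{v} \<union> S"]) auto
  next
    case pair
    with IH[of "{u, w}"] obtain S where S: "S \<subseteq> R - {u, w}"
      "admissible_reduction (V - {u, w}) E (R - {u, w}) S" by auto
    have "u \<in> V" "w \<in> V" "even (deg V E u + deg V E w)" using pair less.prems(2) by auto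
    from admissible_reduction_insert_pair[OF less.prems(1) this(1,2) pair(3,4) this(3) S(2)]
    show ?thesis using S(1) pair(1,2) by (intro exI[of _ "{u, w} \<union> S"]) auto
  qed
qed

lemma admissible_reduction_absorb_vertex:
  assumes sg: "simple_graph V E" and RV: "R \<subseteq> V" and tf: "triangle_free E R"
    and x: "x \<in> V - R" "odd (deg V E x)" "\<forall>q\<in>R. E x q"
    and r: "r \<in> R" "even (deg V E r)"
  shows "\<exists>S. x \<in> S \<and> S \<subseteq> insert x R \<and> admissible_reduction V E R S"
proof -
  have fin: "finite V" using sg by (simp add: simple_graph_def)
  have "r \<in> V" using r RV by auto
  then have x_even: "even (deg (V - {r}) E x)"
    using deg_Diff_singleton[OF fin, of E x r] x r by simp
  have "R - {r} - {x} \<subseteq> V - {r} - {x}" "triangle_free E (R - {r} - {x})"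
    using RV triangle_free_subset[OF tf, of "R - {r} - {x}"] by auto
  then obtain S where S: "S \<subseteq> R - {r} - {x}"
    "admissible_reduction (V - {r} - {x}) E (R - {r} - {x}) S"
    using admissible_reduction_triangle_free[OF simple_graph_Diff[OF sg]] by (metis Diff_insert)
  have "admissible_reduction (V - {r}) E (R - {r}) ({x} \<union> S)"
    using admissible_reduction_insert_even[OF simple_graph_Diff[OF sg] _ x_even S(2)] x r by blast
  then have "admissible_reduction V E R ({r} \<union> ({x} \<union> S))"
    by (rule admissible_reduction_insert_even[OF sg \<open>r \<in> V\<close> r(2)])
  moreover have "{r} \<union> ({x} \<union> S) \<subseteq> insert x R" using S r by blast
  ultimately show ?thesis by (intro exI[of _ "{r} \<union> ({x} \<union> S)"]) simp
qed

lemma admissible_reduction_absorb_edge: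
  assumes sg: "simple_graph V E" and RV: "R \<subseteq> V" and tf: "triangle_free E R"
    and x: "x \<in> V - R" "odd (deg V E x)" "\<forall>q\<in>R. E x q"
    and y: "y \<in> V - R" "odd (deg V E y)" "\<forall>q\<in>R. E y q"
    and xy: "x \<noteq> y" "E x y"
    and r: "r \<in> R" "even (deg V E r)"
    and s: "s \<in> R" "s \<noteq> r" "odd (deg (V - {r}) E s)"
  shows "\<exists>S. {x, y} \<subseteq> S \<and> S \<subseteq> {x, y} \<union> R \<and> admissible_reduction V E R S"
proof -
  have fin: "finite (V - {r})" using sg by (simp add: simple_graph_def)
  have sym: "E s y" using sg y(3) s(1) by (simp add: simple_graph_def)
  have "r \<in> V" using r RV by auto
  have "finite V" using sg by (simp add: simple_graph_def)
  then have "deg V E y = deg (V - {r}) E y + 1" "deg V E x = deg (V - {r}) E x + 1"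
    using deg_Diff_singleton[of V E _ r] \<open>r \<in> V\<close> x(3) y(3) r(1) by auto
  then have y_even: "even (deg (V - {r}) E y)" and "even (deg (V - {r}) E x)"
    using x(2) y(2) by auto
  then have x_odd: "odd (deg (V - {r} - {y}) E x)"
    using deg_Diff_singleton[OF fin, of E x y] y xy r by auto
  have s_even: "even (deg (V - {r} - {y}) E s)"
    using deg_Diff_singleton[OF fin, of E s y] sym y r s by auto
  have sub: "R - {r} - {y} \<subseteq> V - {r} - {y}" "triangle_free E (R - {r} - {y})"
    "x \<in> V - {r} - {y} - (R - {r} - {y})" "\<forall>q\<in>R - {r} - {y}. E x q" "s \<in> R - {r} - {y}"
    using RV triangle_free_subset[OF tf, of "R - {r} - {y}"] x y xy r(1) s by auto
  obtain S where S: "x \<in> S" "S \<subseteq> insert x (R - {r} - {y})"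
    "admissible_reduction (V - {r} - {y}) E (R - {r} - {y}) S"
    using admissible_reduction_absorb_vertex[OF simple_graph_Diff[OF simple_graph_Diff[OF sg]]
        sub(1-3) x_odd sub(4,5) s_even] by blast
  have "admissible_reduction (V - {r}) E (R - {r}) ({y} \<union> S)"
    using admissible_reduction_insert_even[OF simple_graph_Diff[OF sg] _ y_even S(3)] y r by blast
  then have "admissible_reduction V E R ({r} \<union> ({y} \<union> S))"
    by (rule admissible_reduction_insert_even[OF sg \<open>r \<in> V\<close> r(2)])
  moreover have "{x, y} \<subseteq> {r} \<union> ({y} \<union> S)" "{r} \<union> ({y} \<union> S) \<subseteq> {x, y} \<union> R"
    using S r by blast+
  ultimately show ?thesis by (intro exI[of _ "{r} \<union> ({y} \<union> S)"]) simp
qed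

lemma admissible_reduction_absorb_clique:
  assumes sg: "simple_graph V E" and RV: "R \<subseteq> V" and tf: "triangle_free E R"
    and C: "C \<subseteq> V - R" "clique E C" "card C \<le> 2" "\<forall>x\<in>C. odd (deg V E x)"
    and complete: "\<forall>q\<in>R. \<forall>c\<in>C. E q c"
    and r: "r \<in> R" "even (deg V E r)"
    and s: "s \<in> R" "s \<noteq> r" "odd (deg (V - {r}) E s)"
  shows "\<exists>S. C \<subseteq> S \<and> S \<subseteq> C \<union> R \<and> admissible_reduction V E R S"
proof -
  have complete': "\<forall>c\<in>C. \<forall>q\<in>R. E c q" using complete sg by (simp add: simple_graph_def)
  have "finite C" using C(1) sg finite_subset by (auto simp: simple_graph_def)
  moreover have "card C = 0 \<or> card C = 1 \<or> card C = 2" using C(3) by linarith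
  ultimately consider "C = {}" | x where "C = {x}" | x y where "x \<noteq> y" "C = {x, y}"
    by (auto simp: card_1_singleton_iff card_2_iff)
  then show ?thesis
  proof cases
    case 1
    then show ?thesis using admissible_reduction_triangle_free[OF sg RV tf] by blast
  next
    case (2 x)
    then have "x \<in> V - R" "odd (deg V E x)" "\<forall>q\<in>R. E x q" using C complete' by auto
    from admissible_reduction_absorb_vertex[OF sg RV tf this r] show ?thesis
      using 2 by auto
  next
    case (3 x y)
    then have "x \<in> V - R" "odd (deg V E x)" "\<forall>q\<in>R. E x q"
      "y \<in> V - R" "odd (deg V E y)" "\<forall>q\<in>R. E y q" "E x y"
      using C complete' by (auto simp: clique_def)
    from admissible_reduction_absorb_edge[OF sg RV tf this(1-6) \<open>x \<noteq> y\<close> this(7) r s]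
    show ?thesis using 3 by simp
  qed
qed

text \<open>With p marking the odd vertices: deleting r flips the parity of exactly the
neighbours s of r.\<close>

lemma path_even_vertex_flip:
  fixes p :: "'a \<Rightarrow> bool"
  assumes "distinct [a, b, c, d]" "E a b" "E b c" "E c d" "\<not> E a c" "\<not> E a d" "\<not> E b d"
    and "E b a" "E c b" "E d c" "\<not> E c a" "\<not> E d a" "\<not> E d b"
    and "\<exists>q\<in>{a, b, c, d}. \<not> p q"
  shows "\<exists>r\<in>{a, b, c, d}. \<not> p r \<and> (\<exists>s\<in>{a, b, c, d}. s \<noteq> r \<and> p s \<noteq> E s r)"
  using assms by simp blast

lemma induced_P3_even_vertex_parity:
  assumes sg: "simple_graph V E" and P3: "induced_P3 V E R" and "\<exists>q\<in>R. even (deg V E q)"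
  shows "\<exists>r\<in>R. even (deg V E r) \<and> (\<exists>s\<in>R. s \<noteq> r \<and> odd (deg (V - {r}) E s))"
proof -
  obtain a b c d where R: "R = {a, b, c, d}" "distinct [a, b, c, d]"
    and adj: "E a b" "E b c" "E c d" "\<not> E a c" "\<not> E a d" "\<not> E b d"
    using P3 unfolding induced_P3_def by blast
  have flip: "odd (deg (V - {r}) E s) \<longleftrightarrow> odd (deg V E s) \<noteq> E s r" if "r \<in> R" for r s
    using deg_Diff_singleton[of V E s r] sg P3 that by (auto simp: simple_graph_def induced_P3_def)
  have "E b a" "E c b" "E d c" "\<not> E c a" "\<not> E d a" "\<not> E d b"
    using adj sg by (auto simp: simple_graph_def)
  moreover have "\<exists>q\<in>{a, b, c, d}. \<not> odd (deg V E q)" using assms(3) R(1) by simp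
  ultimately obtain r s where rs: "r \<in> R" "even (deg V E r)" "s \<in> R" "s \<noteq> r"
    and "odd (deg V E s) \<noteq> E s r"
    using path_even_vertex_flip[of a b c d E "\<lambda>v. odd (deg V E v)"] R adj by auto
  then have "odd (deg (V - {r}) E s)" using flip[OF rs(1)] by simp
  with rs show ?thesis by blast
qed

lemma induced_P3_triangle_free:
  assumes sg: "simple_graph V E" and P3: "induced_P3 V E R"
  shows "triangle_free E R"
proof -
  obtain a b c d where R: "R = {a, b, c, d}"
    and adj: "\<not> E a c" "\<not> E a d" "\<not> E b d"
    using P3 unfolding induced_P3_def by blast
  have sym: "E u v \<Longrightarrow> E v u" and irrefl: "\<not> E u u" for u v
    using sg by (auto simp: simple_graph_def)
  show ?thesis
    unfolding triangle_free_def R using adj sym irrefl by blast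
qed

lemma admissible_reduction_P3_even_vertex:
  assumes sg: "simple_graph V E" and P3: "induced_P3 V E R"
    and C: "C \<subseteq> V - R" "clique E C" "card C \<le> 2" "\<forall>x\<in>C. odd (deg V E x)"
    and complete: "\<forall>q\<in>R. \<forall>c\<in>C. E q c"
    and even: "\<exists>q\<in>R. even (deg V E q)"
  shows "\<exists>S. C \<subseteq> S \<and> S \<subseteq> C \<union> R \<and> admissible_reduction V E R S"
proof -
  obtain r s where "r \<in> R" "even (deg V E r)" "s \<in> R" "s \<noteq> r" "odd (deg (V - {r}) E s)"
    using induced_P3_even_vertex_parity[OF sg P3 even] by blast
  moreover have "R \<subseteq> V" using P3 by (simp add: induced_P3_def)
  ultimately show ?thesis
    using admissible_reduction_absorb_clique[OF sg _ induced_P3_triangle_free[OF sg P3] C complete]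
    by blast
qed

lemma admissible_reduction_P3_all_odd:
  assumes sg: "simple_graph V E" and P3: "induced_P3 V E R"
    and C: "C \<subseteq> V - R" "clique E C" "card C \<le> 2" "\<forall>x\<in>C. odd (deg V E x)"
    and complete: "\<forall>q\<in>R. \<forall>c\<in>C. E q c"
    and odd: "\<forall>q\<in>R. odd (deg V E q)"
  shows "\<exists>S. C \<subseteq> S \<and> S \<subseteq> C \<union> R \<and> admissible_reduction V E R S"
proof -
  obtain a b c d where R: "R = {a, b, c, d}" "distinct [a, b, c, d]"
    and adj: "E a b" "E b c" "E c d" "\<not> E a c" "\<not> E a d" "\<not> E b d"
    using P3 unfolding induced_P3_def by blast
  have sym: "E u v \<longleftrightarrow> E v u" for u v using sg by (auto simp: simple_graph_def)
  have fin: "finite V" using sg by (simp add: simple_graph_def)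
  have V: "a \<in> V" "b \<in> V" "c \<in> V" "d \<in> V" using P3 R(1) by (auto simp: induced_P3_def)
  let ?V = "V - {a, d}"
  have deg_ad: "deg V E z = deg ?V E z + (if E z a then 1 else 0) + (if E z d then 1 else 0)" for z
    using deg_Diff_pair[OF fin, of a d E z] R(2) V by simp
  have "even (deg ?V E b)" "even (deg ?V E c)"
    using deg_ad[of b] deg_ad[of c] odd R(1) adj sym by auto
  moreover have "deg ?V E c = deg (?V - {b}) E c + 1"
    using deg_Diff_singleton[of ?V E c b] fin V R(2) adj sym by auto
  ultimately have b_even: "even (deg ?V E b)" and c_odd: "odd (deg (?V - {b}) E c)" by auto
  have C': "C \<subseteq> ?V - {b, c}" "\<forall>x\<in>C. odd (deg ?V E x)" "\<forall>q\<in>{b, c}. \<forall>x\<in>C. E q x"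
    using C complete deg_ad R(1) sym by auto
  have "{b, c} \<subseteq> ?V" "triangle_free E {b, c}"
    using V R induced_P3_triangle_free[OF sg P3] triangle_free_subset[of E R "{b, c}"] by auto
  with admissible_reduction_absorb_clique[OF simple_graph_Diff[OF sg] this C'(1) C(2,3) C'(2,3) _
      b_even _ _ c_odd] R(2)
  obtain S where S: "C \<subseteq> S" "S \<subseteq> C \<union> {b, c}" "admissible_reduction ?V E {b, c} S" by auto
  have "R - {a, d} = {b, c}" "even (deg V E a + deg V E d)" using R odd by auto
  with S(3) have "admissible_reduction V E R ({a, d} \<union> S)"
    using admissible_reduction_insert_pair[OF sg V(1,4) _ adj(5)] R(2) by simp
  moreover have "C \<subseteq> {a, d} \<union> S" "{a, d} \<union> S \<subseteq> C \<union> R" using S R(1) by auto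
  ultimately show ?thesis by (intro exI[of _ "{a, d} \<union> S"]) simp
qed

theorem mainTheorem20:
  fixes V :: "'a set" and E :: "'a \<Rightarrow> 'a \<Rightarrow> bool" and R C :: "'a set"
  assumes "simple_graph V E"
    and "induced_P3 V E R"
    and "C \<subseteq> V - R" and "clique E C" and "card C \<le> 2"
    and "\<forall>x\<in>C. odd (deg V E x)"
    and "\<forall>r\<in>R. \<forall>c\<in>C. E r c"
  shows "\<exists>S. C \<subseteq> S \<and> S \<subseteq> C \<union> R \<and> admissible V E S
           \<and> clique E (R - S) \<and> card (R - S) \<le> 2
           \<and> (\<forall>x\<in>R - S. odd (deg (V - S) E x))"
proof -
  have "\<exists>S. C \<subseteq> S \<and> S \<subseteq> C \<union> R \<and> admissible_reduction V E R S"
  proof (cases "\<exists>q\<in>R. even (deg V E q)")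
    case True
    then show ?thesis using admissible_reduction_P3_even_vertex[OF assms] by blast
  next
    case False
    then show ?thesis using admissible_reduction_P3_all_odd[OF assms] by blast
  qed
  then show ?thesis unfolding admissible_reduction_def odd_small_clique_def by blast
qed

end
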